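(* Let $U$ be a projection family and let $\Phi$ be a Følner sequence in $\mathbb{N}$. For every $f\in L^2(\mathbb{N},\Phi)$ there exist a subsequence $\Psi$ of $\Phi$ and $f_U\in U(\Psi)$ such that: (1) $f-f_U\in U(\Psi)^\perp$; (2) $\|f-f_U\|_\Psi=\inf\{\|f-g\|_\Psi: g\in U(\Psi)\}$; (3) if $f$ takes values in an interval $[a,b]$ then $f_U$ takes values in $[a,b]$.
   Context: A Følner sequence in $\mathbb{N}$ is a sequence $\Phi\colon N\mapsto\Phi_N$ of finite non-empty subsets of $\mathbb{N}$ with $|(\Phi_N+m)\triangle\Phi_N|/|\Phi_N|\to0$ for all $m\in\mathbb{N}$. $\|f\|_\Phi=\big(\limsup_{N\to\infty}\frac{1}{|\Phi_N|}\sum_{n\in\Phi_N}|f(n)|^2\big)^{1/2}$, $L^2(\mathbb{N},\Phi)=\{f\colon\mathbb{N}\to\mathbb{C}:\|f\|_\Phi<\infty\}$, and $\langle f,h\rangle_\Phi=\lim_{N\to\infty}\frac{1}{|\Phi_N|}\sum_{n\in\Phi_N}f(n)\overline{h(n)}$ when the limit exists. A projection family is an assignment $\Phi\mapsto U(\Phi)$, defined for every Følner sequence $\Phi$, such that: $U(\Phi)$ is a vector subspace of $L^2(\mathbb{N},\Phi)$; $U(\Phi)$ contains the constant functions and is closed under pointwise complex conjugation; $\langle u,v\rangle_\Phi$ exists for all $u,v\in U(\Phi)$; if $u,v\in U(\Phi)$ are real-valued then $n\mapsto\max\{u(n),v(n)\}$ is in $U(\Phi)$; $U(\Phi)$ is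 closed in the topology induced by $\|\cdot\|_\Phi$; and if $\Psi$ eventually agrees with a subsequence of $\Phi$ then $U(\Psi)\supset U(\Phi)$. For such $U$, $U(\Phi)^\perp=\{v\in L^2(\mathbb{N},\Phi): \langle u,v\rangle_\Phi \text{ exists and equals } 0 \text{ for all } u\in U(\Phi)\}$. *)

theory Defs
  imports "HOL-Analysis.Analysis" "HOL-Library.Liminf_Limsup"
begin

text \<open>Natural numbers are rendered by the type nat (including 0).\<close>

definition folner :: "(nat \<Rightarrow> nat set) \<Rightarrow> bool" where
  "folner \<Phi> \<longleftrightarrow>
     (\<forall>N. finite (\<Phi> N) \<and> \<Phi> N \<noteq> {}) \<and>
     (\<forall>m::nat. (\<lambda>N. real (card ((((\<lambda>n. n + m) ` \<Phi> N) - \<Phi> N) \<union> (\<Phi> N - ((\<lambda>n. n + m) ` \<Phi> N))))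
                     / real (card (\<Phi> N))) \<longlonglongrightarrow> 0)"

definition favg :: "(nat \<Rightarrow> nat set) \<Rightarrow> (nat \<Rightarrow> 'a::real_normed_field) \<Rightarrow> nat \<Rightarrow> 'a" where
  "favg \<Phi> g N = (\<Sum>n\<in>\<Phi> N. g n) / of_nat (card (\<Phi> N))"

definition sqlimsup :: "(nat \<Rightarrow> nat set) \<Rightarrow> (nat \<Rightarrow> complex) \<Rightarrow> ereal" where
  "sqlimsup \<Phi> f = limsup (\<lambda>N. ereal (favg \<Phi> (\<lambda>n. (cmod (f n))\<^sup>2) N))"

definition L2 :: "(nat \<Rightarrow> nat set) \<Rightarrow> (nat \<Rightarrow> complex) set" where
  "L2 \<Phi> = {f. sqlimsup \<Phi> f < \<infinity>}"

text \<open>The seminorm; meaningful for f in L2 (for such f the limsup is a finite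
  nonnegative real).\<close>
definition fnorm :: "(nat \<Rightarrow> nat set) \<Rightarrow> (nat \<Rightarrow> complex) \<Rightarrow> real" where
  "fnorm \<Phi> f = sqrt (real_of_ereal (sqlimsup \<Phi> f))"

definition inner_exists :: "(nat \<Rightarrow> nat set) \<Rightarrow> (nat \<Rightarrow> complex) \<Rightarrow> (nat \<Rightarrow> complex) \<Rightarrow> bool" where
  "inner_exists \<Phi> f h \<longleftrightarrow> convergent (favg \<Phi> (\<lambda>n. f n * cnj (h n)))"

definition finner :: "(nat \<Rightarrow> nat set) \<Rightarrow> (nat \<Rightarrow> complex) \<Rightarrow> (nat \<Rightarrow> complex) \<Rightarrow> complex" where
  "finner \<Phi> f h = lim (favg \<Phi> (\<lambda>n. f n * cnj (h n)))"

definition eventually_subseq :: "(nat \<Rightarrow> nat set) \<Rightarrow> (nat \<Rightarrow> nat set) \<Rightarrow> bool" where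
  "eventually_subseq \<Psi> \<Phi> \<longleftrightarrow>
     (\<exists>\<sigma>::nat \<Rightarrow> nat. strict_mono \<sigma> \<and> (\<exists>N0. \<forall>N\<ge>N0. \<Psi> N = \<Phi> (\<sigma> N)))"

definition is_real_valued :: "(nat \<Rightarrow> complex) \<Rightarrow> bool" where
  "is_real_valued u \<longleftrightarrow> (\<forall>n. u n \<in> \<real>)"

definition projection_family :: "((nat \<Rightarrow> nat set) \<Rightarrow> (nat \<Rightarrow> complex) set) \<Rightarrow> bool" where
  "projection_family U \<longleftrightarrow>
    (\<forall>\<Phi>. folner \<Phi> \<longrightarrow>
       \<comment> \<open>complex vector subspace of L2\<close>
       U \<Phi> \<subseteq> L2 \<Phi> \<and>
       (\<lambda>n. 0) \<in> U \<Phi> \<and>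
       (\<forall>u\<in>U \<Phi>. \<forall>v\<in>U \<Phi>. (\<lambda>n. u n + v n) \<in> U \<Phi>) \<and>
       (\<forall>c::complex. \<forall>u\<in>U \<Phi>. (\<lambda>n. c * u n) \<in> U \<Phi>) \<and>
       \<comment> \<open>constants, conjugation\<close>
       (\<forall>c::complex. (\<lambda>n. c) \<in> U \<Phi>) \<and>
       (\<forall>u\<in>U \<Phi>. (\<lambda>n. cnj (u n)) \<in> U \<Phi>) \<and>
       \<comment> \<open>inner products exist\<close>
       (\<forall>u\<in>U \<Phi>. \<forall>v\<in>U \<Phi>. inner_exists \<Phi> u v) \<and>
       \<comment> \<open>closed under max of real-valued elements\<close>
       (\<forall>u\<in>U \<Phi>. \<forall>v\<in>U \<Phi>. is_real_valued u \<longrightarrow> is_real_valued v \<longrightarrow>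
            (\<lambda>n. complex_of_real (max (Re (u n)) (Re (v n)))) \<in> U \<Phi>) \<and>
       \<comment> \<open>closed in the seminorm topology of L2\<close>
       (\<forall>f\<in>L2 \<Phi>. (\<forall>\<epsilon>>0. \<exists>u\<in>U \<Phi>. fnorm \<Phi> (\<lambda>n. f n - u n) < \<epsilon>) \<longrightarrow> f \<in> U \<Phi>)) \<and>
    (\<forall>\<Phi> \<Psi>. folner \<Phi> \<longrightarrow> folner \<Psi> \<longrightarrow> eventually_subseq \<Psi> \<Phi> \<longrightarrow> U \<Phi> \<subseteq> U \<Psi>)"

definition perp :: "((nat \<Rightarrow> nat set) \<Rightarrow> (nat \<Rightarrow> complex) set) \<Rightarrow> (nat \<Rightarrow> nat set) \<Rightarrow> (nat \<Rightarrow> complex) set" where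
  "perp U \<Phi> = {v \<in> L2 \<Phi>. \<forall>u\<in>U \<Phi>. inner_exists \<Phi> u v \<and> finner \<Phi> u v = 0}"

end

theory Submission
  imports Defs "HOL-Library.Diagonal_Subsequence"
begin

text \<open>
  Write \<open>d(\<Psi>)\<close> for the distance of \<open>f\<close> from \<open>U(\<Psi>)\<close>. Passing to a subsequence can only
  enlarge \<open>U\<close> and shrink the seminorm, so \<open>d\<close> decreases; a diagonal argument yields a
  subsequence along which \<open>d\<close> is stable: it is at least \<open>\<delta>\<close> along every further subsequence
  and at most \<open>\<delta> + \<epsilon>\<close> along suitable tails. Near-minimizers \<open>g\<^sub>j\<close> taken from tails are Cauchy by
  the parallelogram law, since their midpoints still have distance at least \<open>\<delta>\<close>; gluing them
  block by block along a sparse subsequence \<open>\<Psi>\<close> gives a limit \<open>h\<close>, which lies in \<open>U(\<Psi>)\<close> by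
  closedness and satisfies \<open>\<parallel>f - h\<parallel> \<le> \<delta>\<close>. Stability then forces \<open>f - h \<perp> U(\<Psi>)\<close>: a nonzero
  correlation with some \<open>u\<close> along a subsequence would let \<open>h + t u\<close> beat \<open>\<delta>\<close> there. Finally,
  clamping \<open>Re h\<close> to the range of a bounded real \<open>f\<close> stays in \<open>U\<close> (constants and maxima) and
  only decreases \<open>|f - h|\<close> pointwise.
\<close>

section \<open>Square averages and the seminorm\<close>

definition sqavg :: "(nat \<Rightarrow> nat set) \<Rightarrow> (nat \<Rightarrow> complex) \<Rightarrow> nat \<Rightarrow> real" where
  "sqavg X x N = favg X (\<lambda>n. (cmod (x n))\<^sup>2) N"

lemma favg_mono:
  fixes g h :: "nat \<Rightarrow> real"
  assumes "\<And>n. g n \<le> h n"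
  shows "favg X g N \<le> favg X h N"
  unfolding favg_def by (intro divide_right_mono sum_mono assms) auto

lemma sqavg_nonneg: "0 \<le> sqavg X x N"
  unfolding sqavg_def favg_def by (intro divide_nonneg_nonneg sum_nonneg) auto

lemma favg_comp: "favg (X \<circ> r) g N = favg X g (r N)"
  by (simp add: favg_def)

lemma sqavg_comp: "sqavg (X \<circ> r) x N = sqavg X x (r N)"
  by (simp add: sqavg_def favg_comp)

lemma sqrt_sqavg_add_le:
  "sqrt (sqavg X (\<lambda>n. x n + y n) N) \<le> sqrt (sqavg X x N) + sqrt (sqavg X y N)"
proof -
  have sqrt_sqavg: "sqrt (sqavg X z N) = L2_set (\<lambda>n. cmod (z n)) (X N) / sqrt (card (X N))" for z
    by (simp add: sqavg_def favg_def L2_set_def real_sqrt_divide)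
  have "L2_set (\<lambda>n. cmod (x n + y n)) (X N) \<le> L2_set (\<lambda>n. cmod (x n) + cmod (y n)) (X N)"
    by (rule L2_set_mono) (auto intro: norm_triangle_ineq)
  also have "\<dots> \<le> L2_set (\<lambda>n. cmod (x n)) (X N) + L2_set (\<lambda>n. cmod (y n)) (X N)"
    by (rule L2_set_triangle_ineq)
  finally show ?thesis
    unfolding sqrt_sqavg add_divide_distrib[symmetric] by (rule divide_right_mono) simp
qed

lemma sqlimsup_eq_limsup_sqavg: "sqlimsup X x = limsup (\<lambda>N. ereal (sqavg X x N))"
  by (simp add: sqlimsup_def sqavg_def)

lemma sqlimsup_nonneg: "0 \<le> sqlimsup X x"
  unfolding sqlimsup_eq_limsup_sqavg by (rule le_Limsup) (auto simp: sqavg_nonneg)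

lemma fnorm_nonneg: "0 \<le> fnorm X x"
  by (simp add: fnorm_def real_of_ereal_pos sqlimsup_nonneg)

lemma sqlimsup_L2:
  assumes "x \<in> L2 X"
  shows "sqlimsup X x = ereal ((fnorm X x)\<^sup>2)"
proof -
  obtain r where "sqlimsup X x = ereal r" "0 \<le> r"
    using assms sqlimsup_nonneg[of X x] by (cases "sqlimsup X x") (auto simp: L2_def)
  then show ?thesis by (simp add: fnorm_def)
qed

lemma fnorm_minus_commute: "fnorm X (\<lambda>n. x n - y n) = fnorm X (\<lambda>n. y n - x n)"
  by (simp add: fnorm_def sqlimsup_def norm_minus_commute)

lemma eventually_sqavg_less:
  assumes "x \<in> L2 X" "fnorm X x < c"
  shows "eventually (\<lambda>N. sqavg X x N < c\<^sup>2) sequentially"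
proof -
  have "(fnorm X x)\<^sup>2 < c\<^sup>2"
    using assms(2) fnorm_nonneg[of X x] by (simp add: power_strict_mono)
  then have "limsup (\<lambda>N. ereal (sqavg X x N)) < ereal (c\<^sup>2)"
    using sqlimsup_L2[OF assms(1)] by (simp add: sqlimsup_eq_limsup_sqavg)
  from Limsup_lessD[OF this] show ?thesis by simp
qed

lemma sqlimsup_le_if_eventually:
  assumes "eventually (\<lambda>N. sqavg X x N \<le> c) sequentially"
  shows "sqlimsup X x \<le> ereal c"
  unfolding sqlimsup_eq_limsup_sqavg
  by (rule Limsup_bounded) (use assms in \<open>auto elim: eventually_mono\<close>)

lemma L2_if_eventually_sqavg_le:
  assumes "eventually (\<lambda>N. sqavg X x N \<le> c) sequentially"
  shows "x \<in> L2 X"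
  using sqlimsup_le_if_eventually[OF assms] by (auto simp: L2_def)

lemma fnorm_sq_le_if_eventually:
  assumes "eventually (\<lambda>N. sqavg X x N \<le> c) sequentially"
  shows "(fnorm X x)\<^sup>2 \<le> c"
  using sqlimsup_le_if_eventually[OF assms] sqlimsup_L2[OF L2_if_eventually_sqavg_le[OF assms]]
  by simp

lemma fnorm_le_sqrt:
  assumes "\<And>\<eta>. \<eta> > 0 \<Longrightarrow> eventually (\<lambda>N. sqavg X x N \<le> c + \<eta>) sequentially"
  shows "fnorm X x \<le> sqrt c"
proof -
  have "(fnorm X x)\<^sup>2 \<le> c"
    using fnorm_sq_le_if_eventually[OF assms] by (meson field_le_epsilon)
  then have "sqrt ((fnorm X x)\<^sup>2) \<le> sqrt c" by (rule real_sqrt_le_mono)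
  then show ?thesis using fnorm_nonneg[of X x] by simp
qed

lemma fnorm_le:
  assumes "0 \<le> c" "\<And>\<eta>. \<eta> > 0 \<Longrightarrow> eventually (\<lambda>N. sqavg X x N \<le> (c + \<eta>)\<^sup>2) sequentially"
  shows "fnorm X x \<le> c"
proof (rule field_le_epsilon)
  fix \<eta> :: real assume "0 < \<eta>"
  then have "(fnorm X x)\<^sup>2 \<le> (c + \<eta>)\<^sup>2" by (rule fnorm_sq_le_if_eventually[OF assms(2)])
  then show "fnorm X x \<le> c + \<eta>" by (rule power2_le_imp_le) (use assms(1) \<open>0 < \<eta>\<close> in simp)
qed

lemma eventually_sqavg_add_le:
  assumes "x \<in> L2 X" "y \<in> L2 X" "fnorm X x < a" "fnorm X y < b"
  shows "eventually (\<lambda>N. sqavg X (\<lambda>n. x n + y n) N \<le> (a + b)\<^sup>2) sequentially"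
proof -
  have "eventually (\<lambda>N. sqrt (sqavg X z N) \<le> c) sequentially" if "z \<in> L2 X" "fnorm X z < c" for z c
    using eventually_sqavg_less[OF that] fnorm_nonneg[of X z] that(2)
    by (auto elim!: eventually_mono intro: real_le_lsqrt)
  from this[OF assms(1,3)] this[OF assms(2,4)] show ?thesis
  proof eventually_elim
    case (elim N)
    then have "sqrt (sqavg X (\<lambda>n. x n + y n) N) \<le> a + b"
      using sqrt_sqavg_add_le[of X x y N] by linarith
    then show ?case by (rule sqrt_le_D)
  qed
qed

lemma L2_add:
  assumes "x \<in> L2 X" "y \<in> L2 X"
  shows "(\<lambda>n. x n + y n) \<in> L2 X"
  using eventually_sqavg_add_le[OF assms less_add_one less_add_one] by (rule L2_if_eventually_sqavg_le)

lemma L2_minus: "x \<in> L2 X \<Longrightarrow> (\<lambda>n. - x n) \<in> L2 X"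
  by (simp add: L2_def sqlimsup_def)

lemma L2_diff: "x \<in> L2 X \<Longrightarrow> y \<in> L2 X \<Longrightarrow> (\<lambda>n. x n - y n) \<in> L2 X"
  using L2_add[OF _ L2_minus, of x X y] by simp

lemma fnorm_triangle:
  assumes "x \<in> L2 X" "y \<in> L2 X"
  shows "fnorm X (\<lambda>n. x n + y n) \<le> fnorm X x + fnorm X y"
proof (rule fnorm_le)
  show "0 \<le> fnorm X x + fnorm X y" by (simp add: fnorm_nonneg)
  fix \<eta> :: real assume "0 < \<eta>"
  then have "fnorm X x < fnorm X x + \<eta> / 2" "fnorm X y < fnorm X y + \<eta> / 2" by simp_all
  from eventually_sqavg_add_le[OF assms this]
  show "eventually (\<lambda>N. sqavg X (\<lambda>n. x n + y n) N \<le> (fnorm X x + fnorm X y + \<eta>)\<^sup>2) sequentially"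
    by (simp add: algebra_simps)
qed

lemma fnorm_le_of_approximants:
  assumes "\<And>m. (\<lambda>n. f n - g m n) \<in> L2 X" "\<And>m. (\<lambda>n. g m n - h n) \<in> L2 X"
    and "\<And>m. fnorm X (\<lambda>n. f n - g m n) \<le> \<delta> + a m" "\<And>m. fnorm X (\<lambda>n. g m n - h n) \<le> b m"
    and "a \<longlonglongrightarrow> 0" "b \<longlonglongrightarrow> 0"
  shows "fnorm X (\<lambda>n. f n - h n) \<le> \<delta>"
proof (rule LIMSEQ_le_const)
  have "(\<lambda>m. \<delta> + a m + b m) \<longlonglongrightarrow> \<delta> + 0 + 0" by (intro tendsto_intros assms(5,6))
  then show "(\<lambda>m. \<delta> + a m + b m) \<longlonglongrightarrow> \<delta>" by simp
  have "fnorm X (\<lambda>n. f n - h n) \<le> \<delta> + a m + b m" for m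
    using fnorm_triangle[OF assms(1,2)[of m]] assms(3,4)[of m] by simp
  then show "\<exists>N. \<forall>m\<ge>N. fnorm X (\<lambda>n. f n - h n) \<le> \<delta> + a m + b m" by blast
qed

lemma fnorm_mono:
  assumes "\<And>n. cmod (x n) \<le> cmod (y n)" "y \<in> L2 X"
  shows "fnorm X x \<le> fnorm X y"
proof -
  have "sqavg X x N \<le> sqavg X y N" for N
    unfolding sqavg_def by (rule favg_mono) (use assms(1) in \<open>simp add: power_mono\<close>)
  then have "sqlimsup X x \<le> sqlimsup X y"
    unfolding sqlimsup_eq_limsup_sqavg by (intro Limsup_mono) simp
  moreover from this have "x \<in> L2 X" using assms(2) by (auto simp: L2_def)
  ultimately have "(fnorm X x)\<^sup>2 \<le> (fnorm X y)\<^sup>2"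
    using sqlimsup_L2[of x X] sqlimsup_L2[OF assms(2)] by simp
  then show ?thesis using fnorm_nonneg[of X y] by (rule power2_le_imp_le)
qed

section \<open>Folner sequences and their subsequences\<close>

lemma folner_finite: "folner X \<Longrightarrow> finite (X N)"
  by (simp add: folner_def)

lemma folner_card_pos: "folner X \<Longrightarrow> 0 < card (X N)"
  by (simp add: folner_def card_gt_0_iff)

lemma folner_comp:
  assumes "folner X" "strict_mono r"
  shows "folner (X \<circ> r)"
proof -
  have "(\<lambda>N. real (card ((((\<lambda>n. n + m) ` X N) - X N) \<union> (X N - ((\<lambda>n. n + m) ` X N))))
                     / real (card (X N))) \<longlonglongrightarrow> 0" for m
    using assms(1) unfolding folner_def by blast
  from LIMSEQ_subseq_LIMSEQ[OF this assms(2)] show ?thesis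
    using assms(1) unfolding folner_def by (simp add: o_def)
qed

lemma folner_shift: "folner X \<Longrightarrow> folner (X \<circ> (\<lambda>i. k + i))"
  by (erule folner_comp) (simp add: strict_mono_def)

text \<open>Shifting by one moves \<open>Max (X N)\<close> out of \<open>X N\<close>, so the Folner ratio for \<open>m = 1\<close> is at
  least \<open>1 / card (X N)\<close>.\<close>

lemma eventually_folner_card_gt:
  assumes "folner X"
  shows "eventually (\<lambda>N. C < card (X N)) sequentially"
proof -
  define q where "q N = real (card ((((\<lambda>n. n + 1) ` X N) - X N) \<union> (X N - ((\<lambda>n. n + 1) ` X N))))
                     / real (card (X N))" for N
  have "q \<longlonglongrightarrow> 0" using assms unfolding folner_def q_def by blast
  then have ev: "eventually (\<lambda>N. q N < 1 / (real C + 1)) sequentially"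
    by (rule order_tendstoD) simp
  have "1 / real (card (X N)) \<le> q N" for N
  proof -
    have fin: "finite (X N)" "X N \<noteq> {}" using assms by (auto simp: folner_def)
    have "Max (X N) + 1 \<notin> X N" using Max_ge[OF fin(1)] by fastforce
    moreover have "Max (X N) + 1 \<in> (\<lambda>n. n + 1) ` X N" using fin by simp
    ultimately have "Max (X N) + 1 \<in> (((\<lambda>n. n + 1) ` X N) - X N)" by blast
    then have "1 \<le> card ((((\<lambda>n. n + 1) ` X N) - X N) \<union> (X N - ((\<lambda>n. n + 1) ` X N)))"
      using fin(1) by (metis One_nat_def Suc_leI card_gt_0_iff empty_iff finite_Diff finite_UnI
          finite_imageI UnCI)
    then show ?thesis unfolding q_def by (intro divide_right_mono) auto
  qed
  with ev show ?thesis
  proof (elim eventually_mono)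
    fix N assume "q N < 1 / (real C + 1)"
    with \<open>1 / real (card (X N)) \<le> q N\<close> have "1 / real (card (X N)) < 1 / (real C + 1)" by linarith
    then show "C < card (X N)"
      using folner_card_pos[OF assms, of N] by (simp add: frac_less_eq field_simps)
  qed
qed

lemma eventually_le_folner_card:
  assumes "folner X" "0 < e"
  shows "eventually (\<lambda>N. c \<le> real (card (X N)) * e) sequentially"
  using eventually_folner_card_gt[OF assms(1), of "nat \<lceil>c / e\<rceil>"]
proof (rule eventually_mono)
  fix N assume "nat \<lceil>c / e\<rceil> < card (X N)"
  then have "c / e \<le> real (card (X N))" by linarith
  then show "c \<le> real (card (X N)) * e" using assms(2) by (simp add: divide_le_eq)
qed

lemma eventually_subseq_comp: "strict_mono r \<Longrightarrow> eventually_subseq (X \<circ> r) X"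
  unfolding eventually_subseq_def by auto

lemma eventually_subseq_offset:
  assumes "strict_mono \<sigma>" "\<And>i. m \<le> i \<Longrightarrow> k + i \<le> \<sigma> i"
  shows "eventually_subseq (X \<circ> \<sigma>) (X \<circ> (\<lambda>n. k + n))"
proof -
  define \<tau> where "\<tau> i = (if i < m then i else \<sigma> i - k)" for i
  have "\<tau> i < \<tau> (Suc i)" for i
  proof -
    have "\<sigma> i < \<sigma> (Suc i)" using assms(1) by (simp add: strict_mono_Suc_iff)
    moreover have "m \<le> Suc i \<Longrightarrow> k + Suc i \<le> \<sigma> (Suc i)" "m \<le> i \<Longrightarrow> k + i \<le> \<sigma> i"
      by (fact assms(2))+
    ultimately show ?thesis by (auto simp: \<tau>_def)
  qed
  then have "strict_mono \<tau>" by (simp add: strict_mono_Suc_iff)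
  moreover have "\<forall>N\<ge>m. (X \<circ> \<sigma>) N = (X \<circ> (\<lambda>n. k + n)) (\<tau> N)"
  proof (intro allI impI)
    fix N assume "m \<le> N"
    then have "k + N \<le> \<sigma> N" by (rule assms(2))
    then show "(X \<circ> \<sigma>) N = (X \<circ> (\<lambda>n. k + n)) (\<tau> N)" using \<open>m \<le> N\<close> by (simp add: \<tau>_def)
  qed
  ultimately show ?thesis unfolding eventually_subseq_def by blast
qed

lemma sqlimsup_eventually_subseq:
  assumes "eventually_subseq Y X"
  shows "sqlimsup Y x \<le> sqlimsup X x"
proof -
  obtain s N0 where s: "strict_mono s" "\<forall>N\<ge>N0. Y N = X (s N)"
    using assms unfolding eventually_subseq_def by blast
  have "limsup (\<lambda>N. ereal (sqavg Y x N)) = limsup ((\<lambda>N. ereal (sqavg X x N)) \<circ> s)"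
  proof (rule Limsup_eq)
    have "\<forall>N\<ge>N0. sqavg Y x N = sqavg X x (s N)" using s(2) by (simp add: sqavg_def favg_def)
    then show "\<forall>\<^sub>F N in sequentially. ereal (sqavg Y x N) = ((\<lambda>N. ereal (sqavg X x N)) \<circ> s) N"
      unfolding eventually_sequentially by auto
  qed
  also have "\<dots> \<le> limsup (\<lambda>N. ereal (sqavg X x N))" by (rule limsup_subseq_mono[OF s(1)])
  finally show ?thesis by (simp add: sqlimsup_eq_limsup_sqavg)
qed

lemma L2_eventually_subseq: "eventually_subseq Y X \<Longrightarrow> x \<in> L2 X \<Longrightarrow> x \<in> L2 Y"
  unfolding L2_def using sqlimsup_eventually_subseq[of Y X x] by auto

lemma fnorm_eventually_subseq:
  assumes "eventually_subseq Y X" "x \<in> L2 X"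
  shows "fnorm Y x \<le> fnorm X x"
proof -
  have "(fnorm Y x)\<^sup>2 \<le> (fnorm X x)\<^sup>2"
    using sqlimsup_L2[OF L2_eventually_subseq[OF assms]] sqlimsup_L2[OF assms(2)]
      sqlimsup_eventually_subseq[OF assms(1), of x] by simp
  then show ?thesis using fnorm_nonneg by (rule power2_le_imp_le)
qed

lemma sqlimsup_shift: "sqlimsup (X \<circ> (\<lambda>i. k + i)) x = sqlimsup X x"
  unfolding sqlimsup_eq_limsup_sqavg sqavg_comp
  using limsup_shift_k[of "\<lambda>N. ereal (sqavg X x N)" k] by (simp add: add.commute)

lemma fnorm_shift: "fnorm (X \<circ> (\<lambda>i. k + i)) x = fnorm X x"
  by (simp add: fnorm_def sqlimsup_shift)

lemma L2_shift: "x \<in> L2 (X \<circ> (\<lambda>i. k + i)) \<longleftrightarrow> x \<in> L2 X"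
  by (simp add: L2_def sqlimsup_shift)

definition Udist ::
    "((nat \<Rightarrow> nat set) \<Rightarrow> (nat \<Rightarrow> complex) set) \<Rightarrow> (nat \<Rightarrow> complex) \<Rightarrow> (nat \<Rightarrow> nat set) \<Rightarrow> real"
  where "Udist U f X = Inf {fnorm X (\<lambda>n. f n - g n) | g. g \<in> U X}"

lemma Udist_le: "g \<in> U X \<Longrightarrow> Udist U f X \<le> fnorm X (\<lambda>n. f n - g n)"
  unfolding Udist_def by (rule cInf_lower) (auto intro!: bdd_belowI[of _ 0] fnorm_nonneg)

context
  fixes U :: "(nat \<Rightarrow> nat set) \<Rightarrow> (nat \<Rightarrow> complex) set" and X :: "nat \<Rightarrow> nat set"
  assumes U: "projection_family U" and X: "folner X"
begin

lemma projection_family_L2: "U X \<subseteq> L2 X"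
  using U X unfolding projection_family_def by blast

lemma projection_family_add: "u \<in> U X \<Longrightarrow> v \<in> U X \<Longrightarrow> (\<lambda>n. u n + v n) \<in> U X"
  using U X unfolding projection_family_def by blast

lemma projection_family_scale: "u \<in> U X \<Longrightarrow> (\<lambda>n. c * u n) \<in> U X"
  using U X unfolding projection_family_def by blast

lemma projection_family_const: "(\<lambda>n. c) \<in> U X"
  using U X unfolding projection_family_def by blast

lemma projection_family_cnj: "u \<in> U X \<Longrightarrow> (\<lambda>n. cnj (u n)) \<in> U X"
  using U X unfolding projection_family_def by blast

lemma projection_family_max:
  "u \<in> U X \<Longrightarrow> v \<in> U X \<Longrightarrow> is_real_valued u \<Longrightarrow> is_real_valued v \<Longrightarrow>
    (\<lambda>n. complex_of_real (max (Re (u n)) (Re (v n)))) \<in> U X"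
  using U X unfolding projection_family_def by blast

lemma projection_family_closed:
  "f \<in> L2 X \<Longrightarrow> (\<And>\<epsilon>. \<epsilon> > 0 \<Longrightarrow> \<exists>u\<in>U X. fnorm X (\<lambda>n. f n - u n) < \<epsilon>) \<Longrightarrow> f \<in> U X"
  using U X unfolding projection_family_def by blast

lemma projection_family_eventually_subseq:
  "folner Y \<Longrightarrow> eventually_subseq Y X \<Longrightarrow> U X \<subseteq> U Y"
  using U X unfolding projection_family_def by blast

lemma projection_family_limit:
  assumes "\<And>m. g m \<in> U X" "\<And>m. (\<lambda>n. h n - g m n) \<in> L2 X"
    and "\<And>m. fnorm X (\<lambda>n. h n - g m n) \<le> b m" "b \<longlonglongrightarrow> 0"
  shows "h \<in> U X"
proof (rule projection_family_closed)
  show "h \<in> L2 X"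
    using L2_add[OF assms(2)[of 0] projection_family_L2[THEN subsetD, OF assms(1)[of 0]]] by simp
  fix \<epsilon> :: real assume "0 < \<epsilon>"
  with assms(4) have "eventually (\<lambda>m. b m < \<epsilon>) sequentially" by (rule order_tendstoD(2))
  then obtain m where "b m < \<epsilon>" by (auto simp: eventually_sequentially)
  with assms(3)[of m] have "fnorm X (\<lambda>n. h n - g m n) < \<epsilon>" by linarith
  with assms(1)[of m] show "\<exists>u\<in>U X. fnorm X (\<lambda>n. h n - u n) < \<epsilon>" by blast
qed

lemma projection_family_Re: "h \<in> U X \<Longrightarrow> (\<lambda>n. complex_of_real (Re (h n))) \<in> U X"
  using projection_family_scale[OF projection_family_add[OF _ projection_family_cnj], of h h "1/2"]
  by (simp add: complex_add_cnj)

lemma projection_family_clamp: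
  assumes "h \<in> U X"
  shows "(\<lambda>n. complex_of_real (max a (min b (Re (h n))))) \<in> U X"
proof -
  have real: "is_real_valued (\<lambda>n. complex_of_real (z n))" for z by (simp add: is_real_valued_def)
  have "(\<lambda>n. complex_of_real (- Re (h n))) \<in> U X"
    using projection_family_scale[OF projection_family_Re[OF assms], of "-1"] by simp
  from projection_family_max[OF projection_family_const[of "complex_of_real (- b)"] this real real]
  have "(\<lambda>n. complex_of_real (max (- b) (- Re (h n)))) \<in> U X" by simp
  from projection_family_scale[OF this, of "-1"]
  have "(\<lambda>n. complex_of_real (- max (- b) (- Re (h n)))) \<in> U X" by simp
  moreover have "- max (- b) (- x) = min b x" for x :: real by (simp add: max_def min_def)
  ultimately have "(\<lambda>n. complex_of_real (min b (Re (h n)))) \<in> U X" by simp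
  from projection_family_max[OF projection_family_const[of "complex_of_real a"] this real real]
  show ?thesis by simp
qed

lemma Udist_nonneg: "0 \<le> Udist U f X"
  unfolding Udist_def using projection_family_const[of 0]
  by (intro cInf_greatest) (auto intro: fnorm_nonneg)

lemma Udist_lessE:
  assumes "Udist U f X < c"
  obtains g where "g \<in> U X" "fnorm X (\<lambda>n. f n - g n) < c"
proof -
  have "{fnorm X (\<lambda>n. f n - g n) | g. g \<in> U X} \<noteq> {}"
    using projection_family_const[of 0] by blast
  from cInf_lessD[OF this] assms show ?thesis using that unfolding Udist_def by blast
qed

lemma Udist_eventually_subseq:
  assumes "folner Y" "eventually_subseq Y X" "f \<in> L2 X"
  shows "Udist U f Y \<le> Udist U f X"
  unfolding Udist_def
proof (rule cInf_mono)
  show "{fnorm X (\<lambda>n. f n - g n) | g. g \<in> U X} \<noteq> {}"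
    using projection_family_const[of 0] by blast
  show "bdd_below {fnorm Y (\<lambda>n. f n - g n) | g. g \<in> U Y}"
    by (auto intro!: bdd_belowI[of _ 0] fnorm_nonneg)
  fix a assume "a \<in> {fnorm X (\<lambda>n. f n - g n) | g. g \<in> U X}"
  then obtain g where g: "g \<in> U X" "a = fnorm X (\<lambda>n. f n - g n)" by blast
  then have "g \<in> U Y" using projection_family_eventually_subseq[OF assms(1,2)] by blast
  moreover have "(\<lambda>n. f n - g n) \<in> L2 X" using L2_diff assms(3) projection_family_L2 g by blast
  ultimately show "\<exists>a'\<in>{fnorm Y (\<lambda>n. f n - g n) | g. g \<in> U Y}. a' \<le> a"
    using fnorm_eventually_subseq[OF assms(2)] g by blast
qed

end

section \<open>A stable subsequence\<close>

definition almost_stable :: "((nat \<Rightarrow> nat) \<Rightarrow> real) \<Rightarrow> real \<Rightarrow> (nat \<Rightarrow> nat) \<Rightarrow> bool" where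
  "almost_stable D e t \<longleftrightarrow> strict_mono t \<and> (\<forall>r. strict_mono r \<longrightarrow> D t \<le> D (t \<circ> r) + e)"

lemma exists_almost_stable_subseq:
  fixes D :: "(nat \<Rightarrow> nat) \<Rightarrow> real" and s :: "nat \<Rightarrow> nat"
  assumes bdd: "\<And>t. strict_mono t \<Longrightarrow> b \<le> D t" and "strict_mono s" "0 < e"
  shows "\<exists>r. strict_mono r \<and> almost_stable D e (s \<circ> r)"
proof -
  define V where "V = {D (s \<circ> r) | r. strict_mono r}"
  have "D (s \<circ> id) \<in> V" unfolding V_def using strict_mono_id by blast
  then have V: "V \<noteq> {}" "bdd_below V"
    using bdd strict_mono_o[OF \<open>strict_mono s\<close>] by (auto simp: V_def intro!: bdd_belowI[of _ b])
  have "Inf V < Inf V + e" using \<open>0 < e\<close> by simp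
  from cInf_lessD[OF V(1) this] obtain r where r: "strict_mono r" "D (s \<circ> r) < Inf V + e"
    unfolding V_def by blast
  have "D (s \<circ> r) \<le> D (s \<circ> r \<circ> \<rho>) + e" if "strict_mono \<rho>" for \<rho>
  proof -
    have "D (s \<circ> (r \<circ> \<rho>)) \<in> V" unfolding V_def using strict_mono_o[OF r(1) that] by blast
    then have "Inf V \<le> D (s \<circ> r \<circ> \<rho>)" using cInf_lower[OF _ V(2)] by (simp add: o_assoc)
    then show ?thesis using r(2) by simp
  qed
  then show ?thesis
    using r(1) strict_mono_o[OF \<open>strict_mono s\<close> r(1)] unfolding almost_stable_def by blast
qed

lemma almost_stable_comp:
  fixes D :: "(nat \<Rightarrow> nat) \<Rightarrow> real"
  assumes anti: "\<And>t r. strict_mono t \<Longrightarrow> strict_mono r \<Longrightarrow> D (t \<circ> r) \<le> D t"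
    and "strict_mono r" "almost_stable D e s"
  shows "almost_stable D e (s \<circ> r)"
proof -
  have s: "strict_mono s" "\<And>r. strict_mono r \<Longrightarrow> D s \<le> D (s \<circ> r) + e"
    using assms(3) unfolding almost_stable_def by auto
  have "D (s \<circ> r) \<le> D (s \<circ> r \<circ> r') + e" if "strict_mono r'" for r'
  proof -
    have "D (s \<circ> r) \<le> D s" by (rule anti[OF s(1) \<open>strict_mono r\<close>])
    also have "\<dots> \<le> D (s \<circ> (r \<circ> r')) + e" by (rule s(2)[OF strict_mono_o[OF \<open>strict_mono r\<close> that]])
    finally show ?thesis by (simp add: o_assoc)
  qed
  then show ?thesis unfolding almost_stable_def using strict_mono_o[OF s(1) \<open>strict_mono r\<close>] by blast
qed

lemma tail_of_subseq:
  fixes \<rho> :: "nat \<Rightarrow> nat"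
  assumes "strict_mono \<rho>"
  obtains r :: "nat \<Rightarrow> nat" where "strict_mono r" "(\<lambda>i. k + i) \<circ> r = \<rho> \<circ> (\<lambda>j. j + k)"
proof
  define r where "r j = \<rho> (j + k) - k" for j
  have ge: "j + k \<le> \<rho> (j + k)" for j using seq_suble[OF assms] by blast
  show "strict_mono r" unfolding strict_mono_Suc_iff r_def
  proof
    fix j
    have "\<rho> (j + k) < \<rho> (Suc j + k)" using assms by (simp add: strict_mono_Suc_iff)
    then show "\<rho> (j + k) - k < \<rho> (Suc j + k) - k" using ge[of j] by linarith
  qed
  show "(\<lambda>i. k + i) \<circ> r = \<rho> \<circ> (\<lambda>j. j + k)"
  proof
    fix j show "((\<lambda>i. k + i) \<circ> r) j = (\<rho> \<circ> (\<lambda>j. j + k)) j" using ge[of j] by (simp add: r_def)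
  qed
qed

text \<open>Diagonal argument: \<open>D\<close> decreases along further subsequences and is bounded below, so a
  diagonal subsequence makes it stable up to \<open>1 / (k + 1)\<close> from its \<open>k\<close>-th term on.\<close>

lemma stable_subseq:
  fixes D :: "(nat \<Rightarrow> nat) \<Rightarrow> real"
  assumes bdd: "\<And>t. strict_mono t \<Longrightarrow> b \<le> D t"
    and anti: "\<And>t r. strict_mono t \<Longrightarrow> strict_mono r \<Longrightarrow> D (t \<circ> r) \<le> D t"
  obtains s :: "nat \<Rightarrow> nat" and \<delta>
  where "strict_mono s" "b \<le> \<delta>" "\<And>\<rho>. strict_mono \<rho> \<Longrightarrow> \<delta> \<le> D (s \<circ> \<rho>)"
    "\<And>\<epsilon>. 0 < \<epsilon> \<Longrightarrow> \<exists>k. D (s \<circ> (\<lambda>i. k + i)) < \<delta> + \<epsilon>"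
proof -
  interpret subseqs "\<lambda>n. almost_stable D (inverse (real (Suc n)))"
  proof
    fix n and s :: "nat \<Rightarrow> nat" assume "strict_mono s"
    show "\<exists>r. strict_mono r \<and> almost_stable D (inverse (real (Suc n))) (s \<circ> r)"
      by (rule exists_almost_stable_subseq[OF bdd \<open>strict_mono s\<close>]) simp_all
  qed
  define t where "t k = diagseq \<circ> (\<lambda>i. Suc k + i)" for k
  have t: "almost_stable D (inverse (real (Suc k))) (t k)" for k
    unfolding t_def by (rule diagseq_holds, rule almost_stable_comp, rule anti)
  then have b_le: "b \<le> D (t k)" for k by (simp add: almost_stable_def bdd)
  define \<delta> where "\<delta> = (INF k. D (t k))"
  have bdd_t: "bdd_below (range (\<lambda>k. D (t k)))" using b_le by (auto intro!: bdd_belowI[of _ b])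
  have "b \<le> \<delta>" unfolding \<delta>_def using b_le by (intro cINF_greatest) simp_all
  moreover have "\<delta> \<le> D (diagseq \<circ> \<rho>)" if \<rho>: "strict_mono \<rho>" for \<rho>
  proof (rule field_le_epsilon)
    fix e :: real assume "0 < e"
    then obtain k where k: "inverse (real (Suc k)) < e" using reals_Archimedean by blast
    obtain r where r: "strict_mono r" "(\<lambda>i. Suc k + i) \<circ> r = \<rho> \<circ> (\<lambda>j. j + Suc k)"
      using tail_of_subseq[OF \<rho>] by blast
    have "\<delta> \<le> D (t k)" unfolding \<delta>_def by (rule cINF_lower[OF bdd_t]) simp
    also have "\<dots> \<le> D (t k \<circ> r) + inverse (real (Suc k))" using t[of k] r(1) unfolding almost_stable_def by blast
    also have "D (t k \<circ> r) = D ((diagseq \<circ> \<rho>) \<circ> (\<lambda>j. j + Suc k))" by (simp only: t_def comp_assoc r(2))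
    also have "\<dots> \<le> D (diagseq \<circ> \<rho>)"
      by (rule anti[OF strict_mono_o[OF subseq_diagseq \<rho>]]) (simp add: strict_mono_def)
    finally show "\<delta> \<le> D (diagseq \<circ> \<rho>) + e" using k by simp
  qed
  moreover have "\<exists>k. D (diagseq \<circ> (\<lambda>i. k + i)) < \<delta> + \<epsilon>" if "0 < \<epsilon>" for \<epsilon>
  proof -
    have "(INF k. D (t k)) < \<delta> + \<epsilon>" using that by (simp add: \<delta>_def)
    then obtain k where "D (t k) < \<delta> + \<epsilon>" using cInf_lessD[of "range (\<lambda>k. D (t k))"] by blast
    then show ?thesis unfolding t_def by blast
  qed
  ultimately show ?thesis using subseq_diagseq that by blast
qed

lemma Udist_stable_subseq:
  assumes U: "projection_family U" and \<Phi>: "folner \<Phi>" and f: "f \<in> L2 \<Phi>"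
  obtains s :: "nat \<Rightarrow> nat" and \<delta> where "strict_mono s" "0 \<le> \<delta>"
    "\<And>\<rho>. strict_mono \<rho> \<Longrightarrow> \<delta> \<le> Udist U f (\<Phi> \<circ> s \<circ> \<rho>)"
    "\<And>\<epsilon>. 0 < \<epsilon> \<Longrightarrow> \<exists>k. Udist U f (\<Phi> \<circ> s \<circ> (\<lambda>i. k + i)) < \<delta> + \<epsilon>"
proof -
  have nonneg: "0 \<le> Udist U f (\<Phi> \<circ> t)" if "strict_mono t" for t :: "nat \<Rightarrow> nat"
    by (rule Udist_nonneg[OF U folner_comp[OF \<Phi> that]])
  have anti: "Udist U f (\<Phi> \<circ> (t \<circ> r)) \<le> Udist U f (\<Phi> \<circ> t)"
    if "strict_mono t" "strict_mono r" for t r :: "nat \<Rightarrow> nat"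
  proof -
    have "f \<in> L2 (\<Phi> \<circ> t)" using L2_eventually_subseq[OF eventually_subseq_comp[OF that(1)] f] .
    from Udist_eventually_subseq[OF U folner_comp[OF \<Phi> that(1)]
        folner_comp[OF folner_comp[OF \<Phi> that(1)] that(2)] eventually_subseq_comp[OF that(2)] this]
    show ?thesis by (simp add: o_assoc)
  qed
  obtain s :: "nat \<Rightarrow> nat" and \<delta> where "strict_mono s" "0 \<le> \<delta>"
    "\<And>\<rho>. strict_mono \<rho> \<Longrightarrow> \<delta> \<le> Udist U f (\<Phi> \<circ> (s \<circ> \<rho>))"
    "\<And>\<epsilon>. 0 < \<epsilon> \<Longrightarrow> \<exists>k. Udist U f (\<Phi> \<circ> (s \<circ> (\<lambda>i. k + i))) < \<delta> + \<epsilon>"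
    by (rule stable_subseq[where D = "\<lambda>t. Udist U f (\<Phi> \<circ> t)", OF nonneg anti]) blast+
  then show ?thesis using that by (simp add: o_assoc)
qed

section \<open>The residual of a best approximation is orthogonal to \<open>U\<close>\<close>

lemma favg_inner_bound:
  "cmod (favg X (\<lambda>n. u n * cnj (v n)) N) \<le> (sqavg X u N + sqavg X v N) / 2"
proof -
  have "cmod (\<Sum>n\<in>X N. u n * cnj (v n)) \<le> (\<Sum>n\<in>X N. ((cmod (u n))\<^sup>2 + (cmod (v n))\<^sup>2) / 2)"
  proof (rule order_trans[OF norm_sum sum_mono])
    fix n
    have "2 * (cmod (u n) * cmod (v n)) \<le> (cmod (u n))\<^sup>2 + (cmod (v n))\<^sup>2"
      using sum_squares_bound[of "cmod (u n)" "cmod (v n)"] by (simp add: algebra_simps)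
    then show "cmod (u n * cnj (v n)) \<le> ((cmod (u n))\<^sup>2 + (cmod (v n))\<^sup>2) / 2"
      by (simp add: norm_mult)
  qed
  then have "cmod (\<Sum>n\<in>X N. u n * cnj (v n)) / real (card (X N))
      \<le> (\<Sum>n\<in>X N. ((cmod (u n))\<^sup>2 + (cmod (v n))\<^sup>2) / 2) / real (card (X N))"
    by (rule divide_right_mono) simp
  then show ?thesis
    by (simp add: sqavg_def favg_def norm_divide sum.distrib sum_divide_distrib[symmetric]
        add_divide_distrib)
qed

lemma Bseq_favg_inner:
  assumes "u \<in> L2 X" "v \<in> L2 X"
  shows "Bseq (favg X (\<lambda>n. u n * cnj (v n)))"
proof (rule Bseq_eventually_mono)
  show "Bseq (\<lambda>_. ((fnorm X u + 1)\<^sup>2 + (fnorm X v + 1)\<^sup>2) / 2)" by simp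
  show "eventually (\<lambda>N. norm (favg X (\<lambda>n. u n * cnj (v n)) N)
      \<le> norm (((fnorm X u + 1)\<^sup>2 + (fnorm X v + 1)\<^sup>2) / 2)) sequentially"
    using eventually_sqavg_less[OF assms(1) less_add_one] eventually_sqavg_less[OF assms(2) less_add_one]
  proof eventually_elim
    case (elim N)
    then show ?case using favg_inner_bound[of X u v N] by simp
  qed
qed

lemma sqavg_diff_scaled:
  "sqavg X (\<lambda>n. v n - t * u n) N
    = sqavg X v N - 2 * Re (t * favg X (\<lambda>n. u n * cnj (v n)) N) + (cmod t)\<^sup>2 * sqavg X u N"
proof -
  have "(cmod (v n - t * u n))\<^sup>2 = (cmod (v n))\<^sup>2 - 2 * Re (t * (u n * cnj (v n))) + (cmod t)\<^sup>2 * (cmod (u n))\<^sup>2"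
    for n
    unfolding cmod_power2 by (simp add: power2_eq_square algebra_simps)
  then show ?thesis
    by (simp add: sqavg_def favg_def sum.distrib sum_subtractf sum_distrib_left[symmetric] Re_sum
        add_divide_distrib diff_divide_distrib Re_divide_of_nat)
qed

lemma Bseq_not_tendsto_zero_subseq:
  fixes c :: "nat \<Rightarrow> 'a::{real_normed_vector,heine_borel}"
  assumes "Bseq c" "\<not> c \<longlonglongrightarrow> 0"
  obtains r :: "nat \<Rightarrow> nat" and c0 where "strict_mono r" "c0 \<noteq> 0" "(\<lambda>N. c (r N)) \<longlonglongrightarrow> c0"
proof -
  obtain \<epsilon> where "\<epsilon> > 0" "\<not> eventually (\<lambda>N. norm (c N) < \<epsilon>) sequentially"
    using assms(2) unfolding tendsto_iff by auto
  then have "infinite {N. \<epsilon> \<le> norm (c N)}"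
    by (simp add: not_eventually not_less INFM_iff_infinite cofinite_eq_sequentially[symmetric])
  then obtain r1 :: "nat \<Rightarrow> nat" where r1: "strict_mono r1" "\<And>N. \<epsilon> \<le> norm (c (r1 N))"
    using infinite_enumerate by blast
  have "bounded (range (c \<circ> r1))"
    using Bseq_subseq[OF assms(1)] by (simp add: Bseq_eq_bounded o_def)
  then obtain c0 r2 where r2: "strict_mono r2" "((c \<circ> r1) \<circ> r2) \<longlonglongrightarrow> c0"
    using bounded_imp_convergent_subsequence by blast
  have "\<epsilon> \<le> norm c0"
    by (rule tendsto_lowerbound[OF tendsto_norm[OF r2(2)]]) (use r1(2) in simp_all)
  with \<open>\<epsilon> > 0\<close> have "c0 \<noteq> 0" by auto
  with r2(2) show ?thesis using that[OF strict_mono_o[OF r1(1) r2(1)]] by (simp add: o_def)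
qed

lemma fnorm_subseq_diff_less:
  fixes r :: "nat \<Rightarrow> nat"
  assumes "u \<in> L2 Y" "v \<in> L2 Y" "fnorm Y v \<le> \<delta>" "strict_mono r" "c0 \<noteq> 0"
    and lim: "(\<lambda>N. favg Y (\<lambda>n. u n * cnj (v n)) (r N)) \<longlonglongrightarrow> c0"
  obtains t where "fnorm (Y \<circ> r) (\<lambda>n. v n - t * u n) < \<delta>"
proof -
  txt \<open>With \<open>t = s \<cdot> cnj c0\<close> the cross term gains about \<open>2 \<kappa>\<close>, while \<open>s \<cdot> Mu \<le> 1\<close> keeps
    the quadratic term below \<open>\<kappa>\<close>.\<close>
  define Mu where "Mu = (fnorm Y u + 1)\<^sup>2"
  define s where "s = 1 / (Mu + 1)"
  define t where "t = complex_of_real s * cnj c0"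
  define \<kappa> where "\<kappa> = s * (cmod c0)\<^sup>2"
  have "0 < Mu" unfolding Mu_def using fnorm_nonneg[of Y u] by simp
  then have "0 < s" "s * Mu \<le> 1" unfolding s_def by (simp_all add: field_simps)
  then have "0 < \<kappa>" unfolding \<kappa>_def using \<open>c0 \<noteq> 0\<close> by simp
  have Re_t: "Re (t * c0) = \<kappa>" unfolding t_def \<kappa>_def
    by (simp add: mult.assoc[symmetric] complex_mult_cnj cmod_power2 mult.commute)
  have cmod_t: "(cmod t)\<^sup>2 = s * \<kappa>" unfolding t_def \<kappa>_def
    by (simp add: norm_mult power_mult_distrib power2_eq_square)
  have "0 \<le> \<delta>" using assms(3) fnorm_nonneg order_trans by blast
  have "fnorm Y v < sqrt (\<delta>\<^sup>2 + \<kappa> / 4)"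
    using assms(3) real_less_rsqrt[of \<delta> "\<delta>\<^sup>2 + \<kappa> / 4"] \<open>0 < \<kappa>\<close> by simp
  from eventually_sqavg_less[OF assms(2) this]
  have ev_v: "eventually (\<lambda>N. sqavg Y v N < \<delta>\<^sup>2 + \<kappa> / 4) sequentially" using \<open>0 < \<kappa>\<close> by simp
  have ev_u: "eventually (\<lambda>N. sqavg Y u N < Mu) sequentially"
    unfolding Mu_def by (rule eventually_sqavg_less[OF assms(1) less_add_one])
  have "(\<lambda>N. Re (t * favg Y (\<lambda>n. u n * cnj (v n)) (r N))) \<longlonglongrightarrow> Re (t * c0)"
    by (intro tendsto_Re tendsto_mult_left lim)
  then have ev_c: "eventually (\<lambda>N. \<kappa> - \<kappa> / 8 < Re (t * favg Y (\<lambda>n. u n * cnj (v n)) (r N))) sequentially"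
    unfolding Re_t by (rule order_tendstoD) (use \<open>0 < \<kappa>\<close> in simp)
  have "eventually (\<lambda>N. sqavg (Y \<circ> r) (\<lambda>n. v n - t * u n) N \<le> \<delta>\<^sup>2 - \<kappa> / 2) sequentially"
    using eventually_subseq[OF assms(4) ev_v] eventually_subseq[OF assms(4) ev_u] ev_c
  proof eventually_elim
    case (elim N)
    have "(cmod t)\<^sup>2 * sqavg Y u (r N) \<le> \<kappa> * (s * Mu)"
      unfolding cmod_t using elim(2) \<open>0 < s\<close> \<open>0 < \<kappa>\<close> by (simp add: mult_left_mono)
    also have "\<dots> \<le> \<kappa>" using \<open>s * Mu \<le> 1\<close> \<open>0 < \<kappa>\<close> by (simp add: mult_left_le)
    moreover have "sqavg (Y \<circ> r) (\<lambda>n. v n - t * u n) N = sqavg Y v (r N)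
        - 2 * Re (t * favg Y (\<lambda>n. u n * cnj (v n)) (r N)) + (cmod t)\<^sup>2 * sqavg Y u (r N)"
      by (simp only: sqavg_comp sqavg_diff_scaled favg_comp)
    ultimately show ?case using elim(1,3) by linarith
  qed
  then have "fnorm (Y \<circ> r) (\<lambda>n. v n - t * u n) \<le> sqrt (\<delta>\<^sup>2 - \<kappa> / 2)"
    by (intro fnorm_le_sqrt) (auto elim: eventually_mono)
  also have "\<dots> < \<delta>"
    using real_sqrt_less_mono[of "\<delta>\<^sup>2 - \<kappa> / 2" "\<delta>\<^sup>2"] \<open>0 < \<kappa>\<close> \<open>0 \<le> \<delta>\<close> by simp
  finally show ?thesis by (rule that)
qed

context
  fixes U :: "(nat \<Rightarrow> nat set) \<Rightarrow> (nat \<Rightarrow> complex) set" and Y :: "nat \<Rightarrow> nat set"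
    and f :: "nat \<Rightarrow> complex" and \<delta> :: real
  assumes U: "projection_family U" and Y: "folner Y" and f: "f \<in> L2 Y"
    and lower: "\<And>\<rho>. strict_mono \<rho> \<Longrightarrow> \<delta> \<le> Udist U f (Y \<circ> \<rho>)"
begin

lemma eventually_sqavg_residual_gt:
  assumes "0 \<le> \<delta>" "m \<in> U Y" "0 < \<eta>"
  shows "eventually (\<lambda>N. \<delta>\<^sup>2 - \<eta> < sqavg Y (\<lambda>n. f n - m n) N) sequentially"
proof (rule ccontr)
  assume "\<not> ?thesis"
  then have "infinite {N. sqavg Y (\<lambda>n. f n - m n) N \<le> \<delta>\<^sup>2 - \<eta>}"
    by (simp add: not_eventually not_less INFM_iff_infinite cofinite_eq_sequentially[symmetric])
  then obtain r :: "nat \<Rightarrow> nat"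
    where r: "strict_mono r" "\<And>N. sqavg Y (\<lambda>n. f n - m n) (r N) \<le> \<delta>\<^sup>2 - \<eta>"
    using infinite_enumerate by blast
  have "fnorm (Y \<circ> r) (\<lambda>n. f n - m n) \<le> sqrt (\<delta>\<^sup>2 - \<eta>)"
    by (rule fnorm_le_sqrt) (use r(2) in \<open>auto simp: sqavg_comp intro!: always_eventually add_increasing2\<close>)
  also have "\<dots> < \<delta>" using real_sqrt_less_mono[of "\<delta>\<^sup>2 - \<eta>" "\<delta>\<^sup>2"] assms(1,3) by simp
  finally have "fnorm (Y \<circ> r) (\<lambda>n. f n - m n) < \<delta>" .
  moreover have "m \<in> U (Y \<circ> r)"
    using projection_family_eventually_subseq[OF U Y folner_comp[OF Y r(1)] eventually_subseq_comp[OF r(1)]]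
      assms(2) by blast
  ultimately show False using lower[OF r(1)] Udist_le[of m U "Y \<circ> r" f] by linarith
qed

lemma tendsto_favg_inner_residual:
  assumes g: "g \<in> U Y" and u: "u \<in> U Y" and "fnorm Y (\<lambda>n. f n - g n) \<le> \<delta>"
  shows "favg Y (\<lambda>n. u n * cnj (f n - g n)) \<longlonglongrightarrow> 0"
proof (rule ccontr)
  define v where "v n = f n - g n" for n
  have uL: "u \<in> L2 Y" and vL: "v \<in> L2 Y"
    using u g f projection_family_L2[OF U Y] L2_diff unfolding v_def by blast+
  assume "\<not> ?thesis"
  then have "\<not> favg Y (\<lambda>n. u n * cnj (v n)) \<longlonglongrightarrow> 0" by (simp add: v_def)
  with Bseq_favg_inner[OF uL vL] obtain r c0 where r: "strict_mono r" "c0 \<noteq> 0"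
    "(\<lambda>N. favg Y (\<lambda>n. u n * cnj (v n)) (r N)) \<longlonglongrightarrow> c0"
    by (rule Bseq_not_tendsto_zero_subseq)
  obtain t where t: "fnorm (Y \<circ> r) (\<lambda>n. v n - t * u n) < \<delta>"
    using fnorm_subseq_diff_less[OF uL vL _ r] assms(3) unfolding v_def by blast
  have "(\<lambda>n. g n + t * u n) \<in> U (Y \<circ> r)"
    using projection_family_eventually_subseq[OF U Y folner_comp[OF Y r(1)] eventually_subseq_comp[OF r(1)]]
      projection_family_add[OF U Y g projection_family_scale[OF U Y u]] by blast
  then have "\<delta> \<le> fnorm (Y \<circ> r) (\<lambda>n. f n - (g n + t * u n))"
    using lower[OF r(1)] Udist_le order_trans by blast
  with t show False by (simp add: v_def diff_diff_eq)
qed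

lemma residual_perp_Udist:
  assumes g: "g \<in> U Y" and "fnorm Y (\<lambda>n. f n - g n) \<le> \<delta>"
  shows "(\<lambda>n. f n - g n) \<in> perp U Y" "fnorm Y (\<lambda>n. f n - g n) = Udist U f Y"
proof -
  have "(\<lambda>n. f n - g n) \<in> L2 Y" using g f projection_family_L2[OF U Y] L2_diff by blast
  moreover have "inner_exists Y u (\<lambda>n. f n - g n) \<and> finner Y u (\<lambda>n. f n - g n) = 0" if "u \<in> U Y" for u
    using tendsto_favg_inner_residual[OF g that assms(2)]
    by (auto simp: inner_exists_def finner_def intro: convergentI limI)
  ultimately show "(\<lambda>n. f n - g n) \<in> perp U Y" unfolding perp_def by blast
  have "\<delta> \<le> Udist U f Y" using lower[OF strict_mono_id] by simp
  then show "fnorm Y (\<lambda>n. f n - g n) = Udist U f Y" using assms(2) Udist_le[of g U Y f] g by linarith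
qed

end

section \<open>Gluing a sequence of functions along a subsequence\<close>

definition glue :: "(nat \<Rightarrow> nat set) \<Rightarrow> (nat \<Rightarrow> nat \<Rightarrow> complex) \<Rightarrow> nat \<Rightarrow> complex" where
  "glue \<Psi> g n = (if \<exists>j. n \<in> \<Psi> j then g (LEAST j. n \<in> \<Psi> j) n else 0)"

text \<open>On \<open>X (\<sigma> j)\<close> the glued function agrees with \<open>g j\<close> except at points already covered
  by an earlier block, all of which lie in \<open>X 0 \<union> \<dots> \<union> X (\<sigma> (j - 1))\<close> (for \<open>j = 0\<close> the
  truncated \<open>j - 1\<close> is harmless: the inner sum is empty).\<close>

lemma glue_sqsum_le:
  fixes X :: "nat \<Rightarrow> nat set" and \<sigma> :: "nat \<Rightarrow> nat"
  assumes "\<And>N. finite (X N)" "strict_mono \<sigma>"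
  shows "(\<Sum>n\<in>X (\<sigma> j). (cmod (glue (X \<circ> \<sigma>) g n - g m n))\<^sup>2)
    \<le> (\<Sum>n\<in>X (\<sigma> j). (cmod (g j n - g m n))\<^sup>2)
      + (\<Sum>n\<in>(\<Union>N\<le>\<sigma> (j - 1). X N). \<Sum>i<j. (cmod (g i n - g m n))\<^sup>2)"
proof -
  define W where "W = (\<Union>N\<le>\<sigma> (j - 1). X N)"
  define T where "T n = (\<Sum>i<j. (cmod (g i n - g m n))\<^sup>2)" for n
  have T_nonneg: "0 \<le> T n" for n unfolding T_def by (rule sum_nonneg) simp
  have pointwise: "(cmod (glue (X \<circ> \<sigma>) g n - g m n))\<^sup>2 \<le> (cmod (g j n - g m n))\<^sup>2 + (if n \<in> W then T n else 0)"
    if n: "n \<in> X (\<sigma> j)" for n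
  proof -
    define i where "i = (LEAST i. n \<in> X (\<sigma> i))"
    have glue_eq: "glue (X \<circ> \<sigma>) g n = g i n" using n by (auto simp: glue_def i_def)
    have "i \<le> j" "n \<in> X (\<sigma> i)" unfolding i_def by (auto intro: Least_le LeastI n)
    show ?thesis
    proof (cases "i = j")
      case True
      then show ?thesis using glue_eq T_nonneg[of n] by simp
    next
      case False
      with \<open>i \<le> j\<close> have "i < j" by simp
      then have "\<sigma> i \<le> \<sigma> (j - 1)" using strict_mono_leD[OF assms(2)] by simp
      then have "n \<in> W" using \<open>n \<in> X (\<sigma> i)\<close> unfolding W_def by blast
      moreover have "(cmod (g i n - g m n))\<^sup>2 \<le> T n"
        unfolding T_def by (rule member_le_sum) (use \<open>i < j\<close> in auto)
      ultimately show ?thesis using glue_eq by (simp add: add_increasing)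
    qed
  qed
  have "(\<Sum>n\<in>X (\<sigma> j). (cmod (glue (X \<circ> \<sigma>) g n - g m n))\<^sup>2)
      \<le> (\<Sum>n\<in>X (\<sigma> j). (cmod (g j n - g m n))\<^sup>2 + (if n \<in> W then T n else 0))"
    by (rule sum_mono) (rule pointwise)
  also have "\<dots> = (\<Sum>n\<in>X (\<sigma> j). (cmod (g j n - g m n))\<^sup>2) + (\<Sum>n\<in>X (\<sigma> j) \<inter> W. T n)"
    by (simp add: sum.distrib sum.inter_restrict[OF assms(1)])
  also have "(\<Sum>n\<in>X (\<sigma> j) \<inter> W. T n) \<le> (\<Sum>n\<in>W. T n)"
    by (rule sum_mono2) (use assms(1) T_nonneg in \<open>auto simp: W_def\<close>)
  finally show ?thesis unfolding W_def T_def by simp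
qed

lemma glue_sqavg_le:
  fixes X :: "nat \<Rightarrow> nat set" and \<sigma> :: "nat \<Rightarrow> nat"
  assumes X: "folner X" and "strict_mono \<sigma>"
    and "(\<Sum>n\<in>(\<Union>N\<le>\<sigma> (j - 1). X N). \<Sum>i<j. (cmod (g i n - g m n))\<^sup>2) \<le> real (card (X (\<sigma> j))) * e"
  shows "sqavg X (\<lambda>n. glue (X \<circ> \<sigma>) g n - g m n) (\<sigma> j) \<le> sqavg X (\<lambda>n. g j n - g m n) (\<sigma> j) + e"
proof -
  define c where "c = real (card (X (\<sigma> j)))"
  have "0 < c" unfolding c_def using folner_card_pos[OF X] by simp
  have "sqavg X (\<lambda>n. glue (X \<circ> \<sigma>) g n - g m n) (\<sigma> j)
      \<le> ((\<Sum>n\<in>X (\<sigma> j). (cmod (g j n - g m n))\<^sup>2) + c * e) / c"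
    unfolding sqavg_def favg_def c_def
    by (rule divide_right_mono[OF order_trans[OF glue_sqsum_le[OF folner_finite[OF X] assms(2)]]])
      (use assms(3) in simp_all)
  also have "\<dots> = sqavg X (\<lambda>n. g j n - g m n) (\<sigma> j) + e"
    using \<open>0 < c\<close> by (simp add: sqavg_def favg_def c_def add_divide_distrib)
  finally show ?thesis .
qed

text \<open>The blocks \<open>X (\<sigma> j)\<close> are chosen so large that the overlap with earlier blocks is
  negligible, while \<open>g j\<close> is already close to every \<open>g m\<close> with \<open>m \<le> j\<close> on \<open>X (\<sigma> j)\<close>.\<close>

lemma glue_subseq_sqavg:
  fixes X :: "nat \<Rightarrow> nat set" and g :: "nat \<Rightarrow> nat \<Rightarrow> complex" and L :: "nat \<Rightarrow> nat"
  assumes X: "folner X" and \<epsilon>: "\<And>j. 0 < \<epsilon> j"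
    and cauchy: "\<And>j m \<eta>. m \<le> j \<Longrightarrow> 0 < \<eta> \<Longrightarrow>
      eventually (\<lambda>N. sqavg X (\<lambda>n. g j n - g m n) N \<le> B m + \<eta>) sequentially"
  obtains \<sigma> :: "nat \<Rightarrow> nat" where "strict_mono \<sigma>" "\<And>j. L j \<le> \<sigma> j"
    "\<And>m j. m \<le> j \<Longrightarrow> sqavg X (\<lambda>n. glue (X \<circ> \<sigma>) g n - g m n) (\<sigma> j) \<le> B m + 2 * \<epsilon> j"
proof -
  define C where "C p j m = (\<Sum>n\<in>(\<Union>N\<le>p. X N). \<Sum>i<j. (cmod (g i n - g m n))\<^sup>2)" for p j m
  define P where "P j N \<longleftrightarrow> L j \<le> N \<and> (\<forall>m\<in>{..j}. sqavg X (\<lambda>n. g j n - g m n) N \<le> B m + \<epsilon> j)"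
    for j N
  define Q where "Q j p N \<longleftrightarrow> p < N \<and> (\<forall>m\<in>{..Suc j}. C p (Suc j) m \<le> real (card (X N)) * \<epsilon> (Suc j))"
    for j p N
  have ex: "\<exists>N. R N" if "eventually R sequentially" for R
    using that by (auto simp: eventually_sequentially)
  have evP: "eventually (P j) sequentially" for j
  proof -
    have "eventually (\<lambda>N. \<forall>m\<in>{..j}. sqavg X (\<lambda>n. g j n - g m n) N \<le> B m + \<epsilon> j) sequentially"
      using cauchy \<epsilon> by (intro eventually_ball_finite) auto
    with eventually_ge_at_top[of "L j"] show ?thesis unfolding P_def by (rule eventually_conj)
  qed
  have evQ: "eventually (Q j p) sequentially" for j p
  proof -
    have "eventually (\<lambda>N. \<forall>m\<in>{..Suc j}. C p (Suc j) m \<le> real (card (X N)) * \<epsilon> (Suc j)) sequentially"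
      using eventually_le_folner_card[OF X \<epsilon>] by (intro eventually_ball_finite) auto
    with eventually_gt_at_top[of p] show ?thesis unfolding Q_def by (rule eventually_conj)
  qed
  obtain \<sigma> where \<sigma>: "\<And>j. P j (\<sigma> j)" "\<And>j. Q j (\<sigma> j) (\<sigma> (Suc j))"
    using dependent_nat_choice[of P Q] ex[OF evP] ex[OF eventually_conj[OF evP evQ]] by metis
  have "strict_mono \<sigma>" using \<sigma>(2) by (simp add: strict_mono_Suc_iff Q_def)
  moreover have "L j \<le> \<sigma> j" for j using \<sigma>(1) by (simp add: P_def)
  moreover have "sqavg X (\<lambda>n. glue (X \<circ> \<sigma>) g n - g m n) (\<sigma> j) \<le> B m + 2 * \<epsilon> j" if "m \<le> j" for m j
  proof -
    have "C (\<sigma> (j - 1)) j m \<le> real (card (X (\<sigma> j))) * \<epsilon> j"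
    proof (cases j)
      case 0
      then show ?thesis using \<epsilon>[of 0] by (simp add: C_def)
    next
      case (Suc j')
      then show ?thesis using \<sigma>(2)[of j'] \<open>m \<le> j\<close> by (simp add: Q_def)
    qed
    then have "sqavg X (\<lambda>n. glue (X \<circ> \<sigma>) g n - g m n) (\<sigma> j) \<le> sqavg X (\<lambda>n. g j n - g m n) (\<sigma> j) + \<epsilon> j"
      unfolding C_def by (rule glue_sqavg_le[OF X \<open>strict_mono \<sigma>\<close>])
    moreover have "sqavg X (\<lambda>n. g j n - g m n) (\<sigma> j) \<le> B m + \<epsilon> j"
      using \<sigma>(1)[of j] \<open>m \<le> j\<close> by (simp add: P_def)
    ultimately show ?thesis by simp
  qed
  ultimately show ?thesis by (rule that)
qed

lemma glue_subseq:
  fixes X :: "nat \<Rightarrow> nat set" and g :: "nat \<Rightarrow> nat \<Rightarrow> complex" and k :: "nat \<Rightarrow> nat"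
  assumes X: "folner X"
    and cauchy: "\<And>j m \<eta>. m \<le> j \<Longrightarrow> 0 < \<eta> \<Longrightarrow>
      eventually (\<lambda>N. sqavg X (\<lambda>n. g j n - g m n) N \<le> B m + \<eta>) sequentially"
  obtains \<sigma> :: "nat \<Rightarrow> nat" where "strict_mono \<sigma>"
    "\<And>m. eventually_subseq (X \<circ> \<sigma>) (X \<circ> (\<lambda>n. k m + n))"
    "\<And>m. (\<lambda>n. glue (X \<circ> \<sigma>) g n - g m n) \<in> L2 (X \<circ> \<sigma>)"
    "\<And>m. fnorm (X \<circ> \<sigma>) (\<lambda>n. glue (X \<circ> \<sigma>) g n - g m n) \<le> sqrt (B m)"
proof -
  define \<epsilon> :: "nat \<Rightarrow> real" where "\<epsilon> j = inverse (real (Suc j))" for j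
  obtain \<sigma> where \<sigma>: "strict_mono \<sigma>" "\<And>j. j + (\<Sum>i\<le>j. k i) \<le> \<sigma> j"
    "\<And>m j. m \<le> j \<Longrightarrow> sqavg X (\<lambda>n. glue (X \<circ> \<sigma>) g n - g m n) (\<sigma> j) \<le> B m + 2 * \<epsilon> j"
    by (rule glue_subseq_sqavg[where \<epsilon> = \<epsilon> and g = g and B = B and L = "\<lambda>j. j + (\<Sum>i\<le>j. k i)", OF X])
      (auto simp: \<epsilon>_def cauchy)
  have "eventually_subseq (X \<circ> \<sigma>) (X \<circ> (\<lambda>n. k m + n))" for m
  proof (rule eventually_subseq_offset[OF \<sigma>(1)])
    fix i assume "m \<le> i"
    then show "k m + i \<le> \<sigma> i" using \<sigma>(2)[of i] member_le_sum[of m "{..i}" k] by simp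
  qed
  moreover have ev: "eventually (\<lambda>j. sqavg (X \<circ> \<sigma>) (\<lambda>n. glue (X \<circ> \<sigma>) g n - g m n) j \<le> B m + \<eta>)
      sequentially" if "0 < \<eta>" for m \<eta>
  proof -
    have "(\<lambda>j. 2 * \<epsilon> j) \<longlonglongrightarrow> 2 * 0"
      unfolding \<epsilon>_def by (intro tendsto_mult_left LIMSEQ_inverse_real_of_nat)
    then have "eventually (\<lambda>j. 2 * \<epsilon> j < \<eta>) sequentially"
      using that by (intro order_tendstoD(2)) auto
    with eventually_ge_at_top[of m] show ?thesis
      by eventually_elim (use \<sigma>(3) in \<open>fastforce simp: sqavg_comp\<close>)
  qed
  moreover have "(\<lambda>n. glue (X \<circ> \<sigma>) g n - g m n) \<in> L2 (X \<circ> \<sigma>)" for m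
    using ev[of 1] by (rule L2_if_eventually_sqavg_le) simp
  moreover have "fnorm (X \<circ> \<sigma>) (\<lambda>n. glue (X \<circ> \<sigma>) g n - g m n) \<le> sqrt (B m)" for m
    by (rule fnorm_le_sqrt) (rule ev)
  ultimately show ?thesis using that[OF \<sigma>(1)] by blast
qed

section \<open>Existence of a best approximation along a subsequence\<close>

lemma sqavg_parallelogram:
  "sqavg X (\<lambda>n. a n - b n) N = 2 * sqavg X (\<lambda>n. c n - a n) N + 2 * sqavg X (\<lambda>n. c n - b n) N
    - 4 * sqavg X (\<lambda>n. c n - (a n + b n) / 2) N"
proof -
  have "(cmod (a n - b n))\<^sup>2 = 2 * (cmod (c n - a n))\<^sup>2 + 2 * (cmod (c n - b n))\<^sup>2
      - 4 * (cmod (c n - (a n + b n) / 2))\<^sup>2" for n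
    unfolding cmod_power2 by (simp add: power2_eq_square field_simps)
  then show ?thesis
    by (simp add: sqavg_def favg_def sum.distrib sum_subtractf sum_distrib_left[symmetric]
        add_divide_distrib diff_divide_distrib)
qed

context
  fixes U :: "(nat \<Rightarrow> nat set) \<Rightarrow> (nat \<Rightarrow> complex) set" and X :: "nat \<Rightarrow> nat set"
    and f :: "nat \<Rightarrow> complex" and \<delta> :: real
  assumes U: "projection_family U" and X: "folner X" and f: "f \<in> L2 X" and "0 \<le> \<delta>"
    and lower: "\<And>\<rho>. strict_mono \<rho> \<Longrightarrow> \<delta> \<le> Udist U f (X \<circ> \<rho>)"
begin

text \<open>The midpoint of \<open>gi\<close> and \<open>gj\<close> lies in \<open>U\<close> along a common tail, so its distance from \<open>f\<close>
  is eventually at least \<open>\<delta>\<close>; the parallelogram law turns this into a bound on \<open>gi - gj\<close>.\<close>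

lemma eventually_sqavg_diff_le:
  assumes gi: "gi \<in> U (X \<circ> (\<lambda>n. ki + n))" and gj: "gj \<in> U (X \<circ> (\<lambda>n. kj + n))"
    and "fnorm X (\<lambda>n. f n - gi n) < ai" "fnorm X (\<lambda>n. f n - gj n) < aj" "0 < \<eta>"
  shows "eventually (\<lambda>N. sqavg X (\<lambda>n. gi n - gj n) N \<le> 2 * ai\<^sup>2 + 2 * aj\<^sup>2 - 4 * \<delta>\<^sup>2 + \<eta>) sequentially"
proof -
  define K where "K = max ki kj"
  define Y where "Y = X \<circ> (\<lambda>n. K + n)"
  have Y: "folner Y" unfolding Y_def by (rule folner_shift[OF X])
  have U_shift: "U (X \<circ> (\<lambda>n. k + n)) \<subseteq> U Y" if "k \<le> K" for k
    unfolding Y_def using that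
    by (intro projection_family_eventually_subseq[OF U folner_shift[OF X] folner_shift[OF X]]
        eventually_subseq_offset[of _ 0]) (auto simp: strict_mono_def)
  have "gi \<in> U Y" "gj \<in> U Y"
    using U_shift[of ki] U_shift[of kj] gi gj by (auto simp: K_def)
  then have mid_U: "(\<lambda>n. (1/2) * (gi n + gj n)) \<in> U Y"
    by (intro projection_family_scale[OF U Y] projection_family_add[OF U Y])
  have lower_Y: "\<delta> \<le> Udist U f (Y \<circ> \<rho>)" if "strict_mono \<rho>" for \<rho>
    using lower[OF strict_mono_o[OF _ that, of "\<lambda>n. K + n"]] unfolding Y_def
    by (simp add: o_assoc strict_mono_def)
  have "f \<in> L2 Y" unfolding Y_def L2_shift by (rule f)
  from eventually_sqavg_residual_gt[OF U Y this lower_Y \<open>0 \<le> \<delta>\<close> mid_U, of "\<eta> / 4"] \<open>0 < \<eta>\<close>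
  have "eventually (\<lambda>N. \<delta>\<^sup>2 - \<eta> / 4 < sqavg Y (\<lambda>n. f n - (1/2) * (gi n + gj n)) N) sequentially"
    by simp
  then have "eventually (\<lambda>N. \<delta>\<^sup>2 - \<eta> / 4 < sqavg X (\<lambda>n. f n - (gi n + gj n) / 2) (N + K)) sequentially"
    unfolding Y_def sqavg_comp by (simp add: add.commute)
  then have mid: "eventually (\<lambda>N. \<delta>\<^sup>2 - \<eta> / 4 < sqavg X (\<lambda>n. f n - (gi n + gj n) / 2) N) sequentially"
    by (rule eventually_sequentially_seg[THEN iffD1])
  have "gi \<in> L2 X" "gj \<in> L2 X"
    using gi gj projection_family_L2[OF U folner_shift[OF X]] L2_shift by blast+
  then have "(\<lambda>n. f n - gi n) \<in> L2 X" "(\<lambda>n. f n - gj n) \<in> L2 X" using f L2_diff by blast+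
  from eventually_sqavg_less[OF this(1) assms(3)] eventually_sqavg_less[OF this(2) assms(4)] mid
  show ?thesis
  proof eventually_elim
    case (elim N)
    then show ?case using sqavg_parallelogram[of X gi gj N f] by linarith
  qed
qed

lemma Cauchy_approximants:
  assumes tails: "\<And>\<epsilon>. 0 < \<epsilon> \<Longrightarrow> \<exists>k. Udist U f (X \<circ> (\<lambda>i. k + i)) < \<delta> + \<epsilon>"
  obtains g and k :: "nat \<Rightarrow> nat"
  where "\<And>j. g j \<in> U (X \<circ> (\<lambda>n. k j + n))"
    "\<And>j. fnorm X (\<lambda>n. f n - g j n) < \<delta> + inverse (real (Suc j))"
    "\<And>j m \<eta>. m \<le> j \<Longrightarrow> 0 < \<eta> \<Longrightarrow> eventually (\<lambda>N. sqavg X (\<lambda>n. g j n - g m n) N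
      \<le> 4 * (\<delta> + inverse (real (Suc m)))\<^sup>2 - 4 * \<delta>\<^sup>2 + \<eta>) sequentially"
proof -
  define \<epsilon> :: "nat \<Rightarrow> real" where "\<epsilon> j = inverse (real (Suc j))" for j
  have "\<exists>k g. g \<in> U (X \<circ> (\<lambda>n. k + n)) \<and> fnorm X (\<lambda>n. f n - g n) < \<delta> + \<epsilon> j" for j
  proof -
    have "0 < \<epsilon> j" by (simp add: \<epsilon>_def)
    then obtain k where "Udist U f (X \<circ> (\<lambda>i. k + i)) < \<delta> + \<epsilon> j" using tails by blast
    then obtain g where "g \<in> U (X \<circ> (\<lambda>i. k + i))" "fnorm (X \<circ> (\<lambda>i. k + i)) (\<lambda>n. f n - g n) < \<delta> + \<epsilon> j"
      by (rule Udist_lessE[OF U folner_shift[OF X]])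
    then show ?thesis unfolding fnorm_shift by blast
  qed
  then obtain k g where g: "\<And>j. g j \<in> U (X \<circ> (\<lambda>n. k j + n))"
    "\<And>j. fnorm X (\<lambda>n. f n - g j n) < \<delta> + \<epsilon> j"
    by metis
  have "eventually (\<lambda>N. sqavg X (\<lambda>n. g j n - g m n) N \<le> 4 * (\<delta> + \<epsilon> m)\<^sup>2 - 4 * \<delta>\<^sup>2 + \<eta>) sequentially"
    if "m \<le> j" "0 < \<eta>" for j m \<eta>
  proof -
    have "\<epsilon> j \<le> \<epsilon> m" using \<open>m \<le> j\<close> by (simp add: \<epsilon>_def le_imp_inverse_le)
    then have "(\<delta> + \<epsilon> j)\<^sup>2 \<le> (\<delta> + \<epsilon> m)\<^sup>2" using \<open>0 \<le> \<delta>\<close> by (simp add: \<epsilon>_def power_mono)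
    with eventually_sqavg_diff_le[OF g(1)[of j] g(1)[of m] g(2)[of j] g(2)[of m] \<open>0 < \<eta>\<close>] show ?thesis
      by (elim eventually_mono) simp
  qed
  with g show ?thesis unfolding \<epsilon>_def by (rule that)
qed

lemma best_approximation_subseq:
  assumes tails: "\<And>\<epsilon>. 0 < \<epsilon> \<Longrightarrow> \<exists>k. Udist U f (X \<circ> (\<lambda>i. k + i)) < \<delta> + \<epsilon>"
  obtains \<sigma> :: "nat \<Rightarrow> nat" and h
  where "strict_mono \<sigma>" "h \<in> U (X \<circ> \<sigma>)" "fnorm (X \<circ> \<sigma>) (\<lambda>n. f n - h n) \<le> \<delta>"
proof -
  define \<epsilon> :: "nat \<Rightarrow> real" where "\<epsilon> j = inverse (real (Suc j))" for j
  define B where "B m = 4 * (\<delta> + \<epsilon> m)\<^sup>2 - 4 * \<delta>\<^sup>2" for m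
  obtain g k where g: "\<And>j. g j \<in> U (X \<circ> (\<lambda>n. k j + n))" "\<And>j. fnorm X (\<lambda>n. f n - g j n) < \<delta> + \<epsilon> j"
    "\<And>j m \<eta>. m \<le> j \<Longrightarrow> 0 < \<eta> \<Longrightarrow> eventually (\<lambda>N. sqavg X (\<lambda>n. g j n - g m n) N \<le> B m + \<eta>) sequentially"
    unfolding \<epsilon>_def B_def by (rule Cauchy_approximants[OF tails]) blast+
  have \<epsilon>_lim: "\<epsilon> \<longlonglongrightarrow> 0" unfolding \<epsilon>_def by (rule LIMSEQ_inverse_real_of_nat)
  have "(\<lambda>m. sqrt (B m)) \<longlonglongrightarrow> sqrt (4 * (\<delta> + 0)\<^sup>2 - 4 * \<delta>\<^sup>2)"
    unfolding B_def by (intro tendsto_intros \<epsilon>_lim)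
  then have B_lim: "(\<lambda>m. sqrt (B m)) \<longlonglongrightarrow> 0" by simp
  obtain \<sigma> where \<sigma>: "strict_mono \<sigma>" "\<And>m. eventually_subseq (X \<circ> \<sigma>) (X \<circ> (\<lambda>n. k m + n))"
    "\<And>m. (\<lambda>n. glue (X \<circ> \<sigma>) g n - g m n) \<in> L2 (X \<circ> \<sigma>)"
    "\<And>m. fnorm (X \<circ> \<sigma>) (\<lambda>n. glue (X \<circ> \<sigma>) g n - g m n) \<le> sqrt (B m)"
    by (rule glue_subseq[where g = g and B = B and k = k, OF X]) (blast intro: g(3))+
  define \<Psi> where "\<Psi> = X \<circ> \<sigma>"
  define h where "h = glue \<Psi> g"
  have \<Psi>: "folner \<Psi>" unfolding \<Psi>_def by (rule folner_comp[OF X \<sigma>(1)])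
  have near: "(\<lambda>n. h n - g m n) \<in> L2 \<Psi>" "fnorm \<Psi> (\<lambda>n. h n - g m n) \<le> sqrt (B m)" for m
    using \<sigma>(3,4) unfolding h_def \<Psi>_def by blast+
  have g_\<Psi>: "g m \<in> U \<Psi>" for m
    using projection_family_eventually_subseq[OF U folner_shift[OF X] \<Psi> \<sigma>(2)[folded \<Psi>_def]] g(1) by blast
  have h_\<Psi>: "h \<in> U \<Psi>" by (rule projection_family_limit[OF U \<Psi> g_\<Psi> near B_lim])
  moreover have "fnorm \<Psi> (\<lambda>n. f n - h n) \<le> \<delta>"
  proof (rule fnorm_le_of_approximants[OF _ _ _ _ \<epsilon>_lim B_lim])
    fix m
    have f_gm: "(\<lambda>n. f n - g m n) \<in> L2 X"
      using L2_diff f projection_family_L2[OF U folner_shift[OF X]] g(1) L2_shift by blast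
    then show "(\<lambda>n. f n - g m n) \<in> L2 \<Psi>"
      unfolding \<Psi>_def by (rule L2_eventually_subseq[OF eventually_subseq_comp[OF \<sigma>(1)]])
    show "fnorm \<Psi> (\<lambda>n. f n - g m n) \<le> \<delta> + \<epsilon> m"
      using fnorm_eventually_subseq[OF eventually_subseq_comp[OF \<sigma>(1)] f_gm] g(2)[of m]
      unfolding \<Psi>_def by linarith
    show "(\<lambda>n. g m n - h n) \<in> L2 \<Psi>"
      using L2_diff projection_family_L2[OF U \<Psi>] g_\<Psi> h_\<Psi> by blast
    show "fnorm \<Psi> (\<lambda>n. g m n - h n) \<le> sqrt (B m)"
      using near(2)[of m] unfolding fnorm_minus_commute[of _ "g m"] .
  qed
  ultimately show ?thesis unfolding \<Psi>_def using that[OF \<sigma>(1)] by blast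
qed

end

section \<open>Preserving the range of \<open>f\<close>\<close>

lemma abs_diff_clamp_le:
  fixes x y :: real
  assumes "a \<le> x" "x \<le> b"
  shows "\<bar>x - max a (min b y)\<bar> \<le> \<bar>x - y\<bar>"
  using assms by (auto simp: max_def min_def abs_if)

lemma interval_preserving_approximation:
  assumes U: "projection_family U" and \<Psi>: "folner \<Psi>" and h: "h \<in> U \<Psi>" and f: "f \<in> L2 \<Psi>"
  obtains fU where "fU \<in> U \<Psi>" "fnorm \<Psi> (\<lambda>n. f n - fU n) \<le> fnorm \<Psi> (\<lambda>n. f n - h n)"
    "\<forall>a b. (\<forall>n. f n \<in> complex_of_real ` {a..b}) \<longrightarrow> (\<forall>n. fU n \<in> complex_of_real ` {a..b})"
proof (cases "\<exists>a b. \<forall>n. f n \<in> complex_of_real ` {a..b}")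
  case False
  with h show ?thesis using that by blast
next
  case True
  then obtain a1 b1 where ab1: "\<And>n. f n \<in> complex_of_real ` {a1..b1}" by blast
  have f_real: "f n = complex_of_real (Re (f n))" and "a1 \<le> Re (f n)" "Re (f n) \<le> b1" for n
    using ab1[of n] by auto
  then have bdd: "bdd_below (range (\<lambda>n. Re (f n)))" "bdd_above (range (\<lambda>n. Re (f n)))"
    by (auto intro!: bdd_belowI[of _ a1] bdd_aboveI[of _ b1])
  define a0 where "a0 = (INF n. Re (f n))"
  define b0 where "b0 = (SUP n. Re (f n))"
  have f_in: "a0 \<le> Re (f n)" "Re (f n) \<le> b0" for n
    unfolding a0_def b0_def using bdd by (auto intro: cINF_lower cSUP_upper)
  define fU where "fU n = complex_of_real (max a0 (min b0 (Re (h n))))" for n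
  have "fU \<in> U \<Psi>" unfolding fU_def by (rule projection_family_clamp[OF U \<Psi> h])
  moreover have "fnorm \<Psi> (\<lambda>n. f n - fU n) \<le> fnorm \<Psi> (\<lambda>n. f n - h n)"
  proof (rule fnorm_mono)
    fix n
    have "cmod (f n - fU n) = \<bar>Re (f n) - max a0 (min b0 (Re (h n)))\<bar>"
      using f_real[of n] unfolding fU_def by (metis norm_of_real of_real_diff)
    also have "\<dots> \<le> \<bar>Re (f n - h n)\<bar>" using abs_diff_clamp_le[OF f_in] by simp
    also have "\<dots> \<le> cmod (f n - h n)" by (rule abs_Re_le_cmod)
    finally show "cmod (f n - fU n) \<le> cmod (f n - h n)" .
    show "(\<lambda>n. f n - h n) \<in> L2 \<Psi>" using L2_diff f h projection_family_L2[OF U \<Psi>] by blast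
  qed
  moreover have "\<forall>a b. (\<forall>n. f n \<in> complex_of_real ` {a..b}) \<longrightarrow> (\<forall>n. fU n \<in> complex_of_real ` {a..b})"
  proof ((rule allI)+, rule impI)
    fix a b assume ab: "\<forall>n. f n \<in> complex_of_real ` {a..b}"
    have "a \<le> Re (f n) \<and> Re (f n) \<le> b" for n using ab[rule_format, of n] by auto
    then have "a \<le> a0" "b0 \<le> b" unfolding a0_def b0_def by (auto intro: cINF_greatest cSUP_least)
    moreover have "a0 \<le> b0" using f_in[of 0] by linarith
    ultimately have "max a0 (min b0 (Re (h n))) \<in> {a..b}" for n by auto
    then show "\<forall>n. fU n \<in> complex_of_real ` {a..b}" unfolding fU_def by blast
  qed
  ultimately show ?thesis by (rule that)
qed

theorem theorem3p9:
  fixes U :: "(nat \<Rightarrow> nat set) \<Rightarrow> (nat \<Rightarrow> complex) set"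
    and \<Phi> :: "nat \<Rightarrow> nat set"
    and f :: "nat \<Rightarrow> complex"
  assumes "projection_family U"
    and "folner \<Phi>"
    and "f \<in> L2 \<Phi>"
  shows "\<exists>\<sigma>::nat \<Rightarrow> nat. strict_mono \<sigma> \<and>
           (\<exists>fU \<in> U (\<Phi> \<circ> \<sigma>).
              (\<lambda>n. f n - fU n) \<in> perp U (\<Phi> \<circ> \<sigma>) \<and>
              fnorm (\<Phi> \<circ> \<sigma>) (\<lambda>n. f n - fU n) =
                Inf {fnorm (\<Phi> \<circ> \<sigma>) (\<lambda>n. f n - g n) | g. g \<in> U (\<Phi> \<circ> \<sigma>)} \<and>
              (\<forall>a b::real. (\<forall>n. f n \<in> complex_of_real ` {a..b}) \<longrightarrow>
                           (\<forall>n. fU n \<in> complex_of_real ` {a..b})))"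
proof -
  note U = assms(1) and \<Phi> = assms(2) and f = assms(3)
  obtain s :: "nat \<Rightarrow> nat" and \<delta> where s: "strict_mono s" "0 \<le> \<delta>"
    "\<And>\<rho>. strict_mono \<rho> \<Longrightarrow> \<delta> \<le> Udist U f (\<Phi> \<circ> s \<circ> \<rho>)"
    "\<And>\<epsilon>. 0 < \<epsilon> \<Longrightarrow> \<exists>k. Udist U f (\<Phi> \<circ> s \<circ> (\<lambda>i. k + i)) < \<delta> + \<epsilon>"
    by (rule Udist_stable_subseq[OF U \<Phi> f]) blast+
  have X: "folner (\<Phi> \<circ> s)" "f \<in> L2 (\<Phi> \<circ> s)"
    using folner_comp[OF \<Phi> s(1)] L2_eventually_subseq[OF eventually_subseq_comp[OF s(1)] f] by auto
  obtain \<sigma> :: "nat \<Rightarrow> nat" and h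
    where \<sigma>: "strict_mono \<sigma>" "h \<in> U (\<Phi> \<circ> s \<circ> \<sigma>)" "fnorm (\<Phi> \<circ> s \<circ> \<sigma>) (\<lambda>n. f n - h n) \<le> \<delta>"
    by (rule best_approximation_subseq[OF U X s(2-4)])
  define \<Psi> where "\<Psi> = \<Phi> \<circ> s \<circ> \<sigma>"
  have \<Psi>: "folner \<Psi>" "f \<in> L2 \<Psi>" "\<Phi> \<circ> (s \<circ> \<sigma>) = \<Psi>"
    using folner_comp[OF X(1) \<sigma>(1)] L2_eventually_subseq[OF eventually_subseq_comp[OF \<sigma>(1)] X(2)]
    by (auto simp: \<Psi>_def o_assoc)
  obtain fU where fU: "fU \<in> U \<Psi>" "fnorm \<Psi> (\<lambda>n. f n - fU n) \<le> fnorm \<Psi> (\<lambda>n. f n - h n)"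
    "\<forall>a b. (\<forall>n. f n \<in> complex_of_real ` {a..b}) \<longrightarrow> (\<forall>n. fU n \<in> complex_of_real ` {a..b})"
    by (rule interval_preserving_approximation[OF U \<Psi>(1) \<sigma>(2)[folded \<Psi>_def] \<Psi>(2)])
  have "\<delta> \<le> Udist U f (\<Psi> \<circ> \<rho>)" if "strict_mono \<rho>" for \<rho>
    using s(3)[OF strict_mono_o[OF \<sigma>(1) that]] by (simp add: \<Psi>_def o_assoc)
  then have "(\<lambda>n. f n - fU n) \<in> perp U \<Psi>" "fnorm \<Psi> (\<lambda>n. f n - fU n) = Udist U f \<Psi>"
    using residual_perp_Udist[OF U \<Psi>(1,2) _ fU(1)] fU(2) \<sigma>(3) unfolding \<Psi>_def by fastforce+
  with fU(1,3) strict_mono_o[OF s(1) \<sigma>(1)] show ?thesis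
    unfolding \<Psi>(3)[symmetric] Udist_def by blast
qed

end
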